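(* Let $(X,\preceq,T)$ be a quasi-total triple and define the relation $\preceq_T$ on $X$ by $a\preceq_T b:\Leftrightarrow \exists k\in\mathbb{N}_0:\ T^ka\preceq b$ (the completion). Then for all $a,b\in X$, $$\inf\{m\in\mathbb{Z}: a\preceq_T T^mb\}=\inf\{m\in\mathbb{Z}: a\preceq T^mb\},$$ i.e. $(X,\preceq,T)$ and $(X,\preceq_T,T)$ define the same height function; consequently, for any group acting dominatingly on $(X,\preceq,T)$, they give rise to the same translation number $g\mapsto\lim_{n\to\infty}\frac1n h_T(g^na,a)$.
   Context: For a poset $(X,\preceq)$, an order-preserving bijection $T$ is dominant if for all $a,b$ there is $n\in\mathbb{N}$ with $T^na\succ b$. $(X,\preceq,T)$ is a quasi-total triple if $T$ is a dominant order-preserving bijection and there is $N\in\mathbb{N}$ such that for all $a,b$ some $k\in\{0,\dots,N\}$ satisfies $a\preceq T^kb$ or $b\preceq T^ka$. The (relative $T$-)height function is $h_T(a,b)=\inf\{m\in\mathbb{Z}: T^mb\succeq a\}$. A dominating action of a group $G$ is an action by order-preserving bijections commuting with $T$ such that $g.x\succeq T^n.x$ for some $g\in G$, $x\in X$, $n\in\mathbb{N}$. *)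

theory Defs
  imports Main "HOL-Library.Extended_Real"
begin

definition poset :: "('a \<Rightarrow> 'a \<Rightarrow> bool) \<Rightarrow> bool" where
  "poset le \<longleftrightarrow> reflp le \<and> transp le \<and> antisymp le"

definition order_preserving_bij :: "('a \<Rightarrow> 'a \<Rightarrow> bool) \<Rightarrow> ('a \<Rightarrow> 'a) \<Rightarrow> bool" where
  "order_preserving_bij le T \<longleftrightarrow> bij T \<and> (\<forall>a b. le a b \<longleftrightarrow> le (T a) (T b))"

definition dominant :: "('a \<Rightarrow> 'a \<Rightarrow> bool) \<Rightarrow> ('a \<Rightarrow> 'a) \<Rightarrow> bool" where
  "dominant le T \<longleftrightarrow> order_preserving_bij le T \<and>
     (\<forall>a b. \<exists>n::nat. le b ((T ^^ n) a) \<and> (T ^^ n) a \<noteq> b)"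

definition quasi_total_triple :: "('a \<Rightarrow> 'a \<Rightarrow> bool) \<Rightarrow> ('a \<Rightarrow> 'a) \<Rightarrow> bool" where
  "quasi_total_triple le T \<longleftrightarrow> poset le \<and> dominant le T \<and>
     (\<exists>N::nat. \<forall>a b. \<exists>k\<le>N. le a ((T ^^ k) b) \<or> le b ((T ^^ k) a))"

definition completion :: "('a \<Rightarrow> 'a \<Rightarrow> bool) \<Rightarrow> ('a \<Rightarrow> 'a) \<Rightarrow> 'a \<Rightarrow> 'a \<Rightarrow> bool" where
  "completion le T a b \<longleftrightarrow> (\<exists>k::nat. le ((T ^^ k) a) b)"

definition Tpow :: "('a \<Rightarrow> 'a) \<Rightarrow> int \<Rightarrow> 'a \<Rightarrow> 'a" where
  "Tpow T m = (if 0 \<le> m then T ^^ nat m else (inv T) ^^ nat (- m))"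

text \<open>Relative T-height h_T(a,b) = inf{m \<in> Z. a \<preceq> T^m b}, valued in the extended reals
  (so that empty / unbounded sets are handled faithfully).\<close>
definition height :: "('a \<Rightarrow> 'a \<Rightarrow> bool) \<Rightarrow> ('a \<Rightarrow> 'a) \<Rightarrow> 'a \<Rightarrow> 'a \<Rightarrow> ereal" where
  "height le T a b = Inf ((\<lambda>m. ereal (real_of_int m)) ` {m::int. le a (Tpow T m b)})"

end

theory Submission
  imports Defs
begin

text \<open>Shifting the exponent of T by k turns T^k a \<preceq> T^m b into a \<preceq> T^(m-k) b, so
  {m. a \<preceq>_T T^m b} is the upward closure in \<int> of {m. a \<preceq> T^m b}; a set and its
  upward closure have the same infimum.\<close>

lemma Tpow_add_one:
  assumes "bij T"
  shows "Tpow T (i + 1) x = T (Tpow T i x)"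
proof (cases "0 \<le> i")
  case True
  then have "nat (i + 1) = Suc (nat i)" by simp
  with True show ?thesis by (simp add: Tpow_def)
next
  case False
  then have "nat (- i) = Suc (nat (- (i + 1)))" by simp
  with False assms show ?thesis
    by (cases "i + 1 = 0") (simp_all add: Tpow_def bij_is_surj surj_f_inv_f)
qed

lemma Tpow_add_nat:
  assumes "bij T"
  shows "Tpow T (i + int k) x = (T ^^ k) (Tpow T i x)"
proof (induction k)
  case 0
  then show ?case by simp
next
  case (Suc k)
  have "Tpow T (i + int (Suc k)) x = Tpow T ((i + int k) + 1) x"
    by (simp add: ac_simps)
  also have "\<dots> = T (Tpow T (i + int k) x)"
    using Tpow_add_one[OF assms] .
  finally show ?case using Suc by simp
qed

lemma order_preserving_funpow_iff:
  assumes "\<forall>a b. le a b \<longleftrightarrow> le (T a) (T b)"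
  shows "le ((T ^^ k) x) ((T ^^ k) y) \<longleftrightarrow> le x y"
  by (induction k) (use assms in auto)

lemma completion_Tpow_iff:
  assumes "order_preserving_bij le T"
  shows "completion le T a (Tpow T m b) \<longleftrightarrow> (\<exists>k::nat. le a (Tpow T (m - int k) b))"
proof -
  have "bij T" and mono: "\<forall>a b. le a b \<longleftrightarrow> le (T a) (T b)"
    using assms by (auto simp: order_preserving_bij_def)
  have "le ((T ^^ k) a) (Tpow T m b) \<longleftrightarrow> le a (Tpow T (m - int k) b)" for k
    using Tpow_add_nat[OF \<open>bij T\<close>, of "m - int k" k b]
      order_preserving_funpow_iff[OF mono, of k a "Tpow T (m - int k) b"]
    by simp
  then show ?thesis by (simp add: completion_def)
qed

lemma Inf_eq_if_subset_coinitial: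
  fixes A B :: "'a::complete_lattice set"
  assumes "A \<subseteq> B" and "\<And>y. y \<in> B \<Longrightarrow> \<exists>x\<in>A. x \<le> y"
  shows "Inf A = Inf B"
  using assms by (intro antisym Inf_mono Inf_superset_mono) auto

lemma height_completion:
  assumes "order_preserving_bij le T"
  shows "height (completion le T) T a b = height le T a b"
proof -
  let ?f = "\<lambda>m::int. ereal (real_of_int m)"
  define S where "S = {m. le a (Tpow T m b)}"
  define S' where "S' = {m. completion le T a (Tpow T m b)}"
  have "S \<subseteq> S'"
  proof
    fix m assume "m \<in> S"
    then have "\<exists>k::nat. le a (Tpow T (m - int k) b)"
      by (intro exI[of _ 0]) (simp add: S_def)
    then show "m \<in> S'" using completion_Tpow_iff[OF assms] by (simp add: S'_def)
  qed
  moreover have "\<exists>n\<in>S. n \<le> m" if "m \<in> S'" for m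
  proof -
    from that obtain k :: nat where "le a (Tpow T (m - int k) b)"
      using completion_Tpow_iff[OF assms] by (auto simp: S'_def)
    then show ?thesis by (intro bexI[of _ "m - int k"]) (auto simp: S_def)
  qed
  ultimately have "Inf (?f ` S) = Inf (?f ` S')"
    by (intro Inf_eq_if_subset_coinitial) auto
  then show ?thesis by (simp add: height_def S_def S'_def)
qed

theorem proposition3p13:
  fixes le :: "'a \<Rightarrow> 'a \<Rightarrow> bool" and T :: "'a \<Rightarrow> 'a"
  assumes "quasi_total_triple le T"
  shows "\<forall>a b. height (completion le T) T a b = height le T a b"
proof -
  have "order_preserving_bij le T"
    using assms by (simp add: quasi_total_triple_def dominant_def)
  then show ?thesis by (blast intro: height_completion)
qed

end
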